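(* Assume $\mathbf a,\mathbf b\in\Delta^n$ with strictly positive entries, let $\eta>0$, let $X^\eta$ be the unique minimizer of $g_\eta$ over $\mathbb{R}^{n\times n}_+$, and set $\gamma=\|C\|_\infty+2\eta$. Then $$\|X^\eta\mathbf 1_n-\mathbf a\|_1\le\frac{n\gamma}{\tau},\qquad \|(X^\eta)^\top\mathbf 1_n-\mathbf b\|_1\le\frac{n\gamma}{\tau}.$$
   Context: Let $n\ge1$, $C\in\mathbb{R}^{n\times n}$ with nonnegative entries and $\|C\|_\infty=\max_{i,j}|C_{ij}|$; $\tau>0$; $\Delta^n=\{\mathbf x\in\mathbb{R}^n_+:\sum_i x_i=1\}$. For $\mathbf x\in\mathbb{R}^n_+$ and $\mathbf y$ with positive entries, $\mathbf{KL}(\mathbf x\|\mathbf y)=\sum_i x_i\log(x_i/y_i)-x_i+y_i$ (with $0\log0=0$). $\|X\|_2$ is the Frobenius norm, $\mathbf 1_n$ the all-ones vector. $g_\eta(X)=\langle C,X\rangle+\eta\|X\|_2^2+\tau\mathbf{KL}(X\mathbf 1_n\|\mathbf a)+\tau\mathbf{KL}(X^\top\mathbf 1_n\|\mathbf b)$ for $X\in\mathbb{R}^{n\times n}_+$. *)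

theory Defs
  imports "HOL-Analysis.Analysis"
begin

text \<open>n x n real matrices are rendered as real^'n^'n with 'n a finite index type (n = CARD('n)).\<close>

definition row_sums :: "real^'n^'n::finite \<Rightarrow> real^'n" where
  "row_sums X = (\<chi> i. \<Sum>j\<in>UNIV. X $ i $ j)"

definition col_sums :: "real^'n^'n::finite \<Rightarrow> real^'n" where
  "col_sums X = (\<chi> j. \<Sum>i\<in>UNIV. X $ i $ j)"

definition in_simplex :: "real^'n::finite \<Rightarrow> bool" where
  "in_simplex x \<longleftrightarrow> (\<forall>i. 0 \<le> x $ i) \<and> (\<Sum>i\<in>UNIV. x $ i) = 1"

definition nonneg_mat :: "real^'n^'n::finite \<Rightarrow> bool" where
  "nonneg_mat X \<longleftrightarrow> (\<forall>i j. 0 \<le> X $ i $ j)"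

definition KL :: "real^'n::finite \<Rightarrow> real^'n \<Rightarrow> real" where
  "KL x y = (\<Sum>i\<in>UNIV. (if x $ i = 0 then 0 else x $ i * ln (x $ i / y $ i)) - x $ i + y $ i)"

definition frob_sq :: "real^'n^'n::finite \<Rightarrow> real" where
  "frob_sq X = (\<Sum>i\<in>UNIV. \<Sum>j\<in>UNIV. (X $ i $ j)^2)"

definition frob_inner :: "real^'n^'n::finite \<Rightarrow> real^'n^'n \<Rightarrow> real" where
  "frob_inner C X = (\<Sum>i\<in>UNIV. \<Sum>j\<in>UNIV. C $ i $ j * X $ i $ j)"

definition max_abs_norm :: "real^'n^'n::finite \<Rightarrow> real" where
  "max_abs_norm C = Max {\<bar>C $ i $ j\<bar> | i j. True}"

definition norm1 :: "real^'n::finite \<Rightarrow> real" where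
  "norm1 x = (\<Sum>i\<in>UNIV. \<bar>x $ i\<bar>)"

definition g_eta :: "real^'n^'n::finite \<Rightarrow> real \<Rightarrow> real \<Rightarrow> real^'n \<Rightarrow> real^'n \<Rightarrow> real^'n^'n \<Rightarrow> real" where
  "g_eta C \<tau> \<eta> a b X = frob_inner C X + \<eta> * frob_sq X
      + \<tau> * KL (row_sums X) a + \<tau> * KL (col_sums X) b"

end

theory Submission
  imports Defs
begin

text \<open>Both bounds come from first-order optimality of \<open>X\<close> along two feasible directions,
  using that \<open>y \<mapsto> y ln (y/a) - y + a\<close> is convex with derivative \<open>ln (y/a)\<close>.
  Shrinking \<open>X\<close> towards \<open>0\<close> cannot decrease \<open>g\<close>, which forces the total mass of \<open>X\<close> to be at
  most \<open>1\<close>; hence \<open>X\<close> has entries at most \<open>1\<close>, and for every \<open>i\<close> there is a column \<open>j\<close> whose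
  sum is at most \<open>b\<^sub>j\<close>. Increasing the entry \<open>X\<^sub>i\<^sub>j\<close> then changes \<open>g\<close> at rate at most
  \<open>C\<^sub>i\<^sub>j + 2\<eta> + \<tau> ln (r\<^sub>i/a\<^sub>i)\<close>, where \<open>r = X 1\<close>; as this rate is nonnegative,
  \<open>a\<^sub>i - r\<^sub>i \<le> a\<^sub>i \<gamma>/\<tau>\<close>. Since the masses satisfy \<open>\<Sum> r \<le> 1 = \<Sum> a\<close>, these one-sided bounds
  control every \<open>|r\<^sub>i - a\<^sub>i|\<close> by \<open>\<gamma>/\<tau>\<close>. The column bound follows by transposition.\<close>

text \<open>The hypothesis \<open>y > 0 \<or> y = x\<close> is needed because of the junk value \<open>ln 0 = 0\<close>:
  for \<open>y = 0 < x\<close> the right-hand side vanishes while the left-hand side may be positive.\<close>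

lemma kl_summand_diff_le:
  fixes x y a :: real
  assumes "a > 0" "x \<ge> 0" "y > 0 \<or> y = x"
  shows "((if y = 0 then 0 else y * ln (y/a)) - y + a) - ((if x = 0 then 0 else x * ln (x/a)) - x + a)
    \<le> (y - x) * ln (y/a)"
proof (cases "y = x")
  case False
  then have y: "y > 0" using assms by auto
  show ?thesis
  proof (cases "x = 0")
    case True
    then show ?thesis using y by simp
  next
    case False
    then have x: "x > 0" using assms by auto
    have "x * ln (y/x) \<le> x * (y/x - 1)"
      using x y by (intro mult_left_mono ln_le_minus_one) auto
    also have "\<dots> = y - x" using x by (simp add: field_simps)
    finally have "x * ln (y/x) \<le> y - x" .
    moreover have "ln (y/x) = ln (y/a) - ln (x/a)" using x y assms(1) by (simp add: ln_div)
    ultimately show ?thesis using x y by (simp add: algebra_simps)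
  qed
qed simp

lemma mult_ln_ge:
  fixes r a t :: real
  assumes "r \<ge> 0" "a > 0" "t > 0"
  shows "r - a/t \<le> r * ln (t * r / a)"
proof (cases "r = 0")
  case False
  then have r: "r > 0" using assms by auto
  have "ln (a / (t * r)) \<le> a / (t * r) - 1" using r assms by (intro ln_le_minus_one) simp
  moreover have "ln (a / (t * r)) = - ln (t * r / a)" using r assms by (simp add: ln_div)
  ultimately have "r * (- ln (t * r / a)) \<le> r * (a / (t * r) - 1)"
    using r by (intro mult_left_mono) auto
  also have "\<dots> = a / t - r" using r assms by (simp add: field_simps)
  finally show ?thesis by simp
qed (use assms in simp)

lemma sum_mult_ln_ge:
  fixes v w :: "real^'n::finite"
  assumes "\<forall>k. v $ k \<ge> 0" "\<forall>k. w $ k > 0" "(\<Sum>k\<in>UNIV. w $ k) = 1" "t > 0"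
  shows "(\<Sum>k\<in>UNIV. v $ k) - 1 / t \<le> (\<Sum>k\<in>UNIV. v $ k * ln (t * v $ k / w $ k))"
proof -
  have "(\<Sum>k\<in>UNIV. v $ k) - 1 / t = (\<Sum>k\<in>UNIV. v $ k - w $ k / t)"
    using assms(3) by (simp add: sum_subtractf sum_divide_distrib[symmetric])
  also have "\<dots> \<le> (\<Sum>k\<in>UNIV. v $ k * ln (t * v $ k / w $ k))"
    using assms by (intro sum_mono mult_ln_ge) auto
  finally show ?thesis .
qed

lemma KL_diff_le:
  fixes x y a :: "real^'n::finite"
  assumes "\<forall>k. a $ k > 0" "\<forall>k. x $ k \<ge> 0" "\<forall>k. y $ k > 0 \<or> y $ k = x $ k"
  shows "KL y a - KL x a \<le> (\<Sum>k\<in>UNIV. (y $ k - x $ k) * ln (y $ k / a $ k))"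
  unfolding KL_def sum_subtractf[symmetric]
  using assms by (intro sum_mono kl_summand_diff_le) auto

lemma row_sums_nonneg: "nonneg_mat X \<Longrightarrow> 0 \<le> row_sums X $ i"
  unfolding nonneg_mat_def row_sums_def by (simp add: sum_nonneg)

lemma col_sums_nonneg: "nonneg_mat X \<Longrightarrow> 0 \<le> col_sums X $ j"
  unfolding nonneg_mat_def col_sums_def by (simp add: sum_nonneg)

lemma sum_col_sums: "(\<Sum>j\<in>UNIV. col_sums X $ j) = (\<Sum>i\<in>UNIV. row_sums X $ i)"
  unfolding row_sums_def col_sums_def by simp (rule sum.swap)

lemma entry_le_sum_row_sums:
  assumes "nonneg_mat X"
  shows "X $ i $ j \<le> (\<Sum>k\<in>UNIV. row_sums X $ k)"
proof -
  have "X $ i $ j \<le> row_sums X $ i"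
    using assms unfolding row_sums_def nonneg_mat_def by (simp add: member_le_sum)
  also have "\<dots> \<le> (\<Sum>k\<in>UNIV. row_sums X $ k)"
    using assms by (intro member_le_sum) (auto simp: row_sums_nonneg)
  finally show ?thesis .
qed

lemma abs_entry_le_max_abs_norm: "\<bar>C $ i $ j\<bar> \<le> max_abs_norm C"
proof -
  have "{\<bar>C $ i $ j\<bar> | i j. True} = (\<lambda>(i, j). \<bar>C $ i $ j\<bar>) ` UNIV" by auto
  then show ?thesis unfolding max_abs_norm_def by (intro Max_ge) auto
qed

lemma max_abs_norm_nonneg: "0 \<le> max_abs_norm C"
  using abs_entry_le_max_abs_norm abs_ge_zero order_trans by blast

lemma double_sum_delta:
  "(\<Sum>p\<in>(UNIV::'n::finite set). \<Sum>q\<in>(UNIV::'m::finite set). if p = i \<and> q = j then v else 0) = (v::real)"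
proof -
  have "(\<Sum>q\<in>(UNIV::'m set). if p = i \<and> q = j then v else 0) = (if p = i then v else 0)" for p
    by (cases "p = i") auto
  then show ?thesis by simp
qed

lemma row_sums_scaleR [simp]: "row_sums (t *\<^sub>R X) $ k = t * row_sums X $ k"
  unfolding row_sums_def by (simp add: sum_distrib_left)

lemma col_sums_scaleR [simp]: "col_sums (t *\<^sub>R X) $ k = t * col_sums X $ k"
  unfolding col_sums_def by (simp add: sum_distrib_left)

lemma frob_inner_scaleR [simp]: "frob_inner C (t *\<^sub>R X) = t * frob_inner C X"
  unfolding frob_inner_def by (simp add: sum_distrib_left algebra_simps)

lemma frob_sq_scaleR [simp]: "frob_sq (t *\<^sub>R X) = t\<^sup>2 * frob_sq X"
  unfolding frob_sq_def by (simp add: sum_distrib_left power_mult_distrib)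

definition add_entry :: "real^'n^'n::finite \<Rightarrow> 'n \<Rightarrow> 'n \<Rightarrow> real \<Rightarrow> real^'n^'n" where
  "add_entry X i j e = (\<chi> p q. X $ p $ q + (if p = i \<and> q = j then e else 0))"

lemma add_entry_nth [simp]:
  "add_entry X i j e $ p $ q = X $ p $ q + (if p = i \<and> q = j then e else 0)"
  by (simp add: add_entry_def)

lemma row_sums_add_entry [simp]:
  "row_sums (add_entry X i j e) $ k = row_sums X $ k + (if k = i then e else 0)"
  unfolding row_sums_def by (simp add: sum.distrib)

lemma col_sums_add_entry [simp]:
  "col_sums (add_entry X i j e) $ k = col_sums X $ k + (if k = j then e else 0)"
  unfolding col_sums_def by (simp add: sum.distrib)

lemma frob_inner_add_entry [simp]:
  "frob_inner C (add_entry X i j e) = frob_inner C X + e * C $ i $ j"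
proof -
  have "C $ p $ q * add_entry X i j e $ p $ q - C $ p $ q * X $ p $ q
      = (if p = i \<and> q = j then e * C $ i $ j else 0)" for p q
    by (auto simp: algebra_simps)
  then have "frob_inner C (add_entry X i j e) - frob_inner C X = e * C $ i $ j"
    unfolding frob_inner_def sum_subtractf[symmetric] by (simp add: double_sum_delta)
  then show ?thesis by simp
qed

lemma frob_sq_add_entry [simp]:
  "frob_sq (add_entry X i j e) = frob_sq X + 2 * e * X $ i $ j + e\<^sup>2"
proof -
  have "(add_entry X i j e $ p $ q)\<^sup>2 - (X $ p $ q)\<^sup>2
      = (if p = i \<and> q = j then 2 * e * X $ i $ j + e\<^sup>2 else 0)" for p q
    by (auto simp: algebra_simps power2_eq_square)
  then have "frob_sq (add_entry X i j e) - frob_sq X = 2 * e * X $ i $ j + e\<^sup>2"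
    unfolding frob_sq_def sum_subtractf[symmetric] by (simp add: double_sum_delta)
  then show ?thesis by simp
qed

lemma norm1_diff_le_of_deficit_le:
  fixes r a :: "real^'n::finite"
  assumes a_nonneg: "\<forall>k. a $ k \<ge> 0" and sum_a: "(\<Sum>k\<in>UNIV. a $ k) = 1"
    and sum_r: "(\<Sum>k\<in>UNIV. r $ k) \<le> 1"
    and "G \<ge> 0" and deficit: "\<forall>k. a $ k - r $ k \<le> a $ k * G"
  shows "norm1 (r - a) \<le> real CARD('n) * G"
proof -
  have "(\<Sum>k\<in>UNIV. max 0 (a $ k - r $ k)) \<le> (\<Sum>k\<in>UNIV. a $ k * G)"
    using deficit a_nonneg \<open>G \<ge> 0\<close> by (intro sum_mono) simp
  also have "\<dots> = G" using sum_a by (simp add: sum_distrib_right[symmetric])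
  finally have total_deficit: "(\<Sum>k\<in>UNIV. max 0 (a $ k - r $ k)) \<le> G" .
  have "\<bar>r $ i - a $ i\<bar> \<le> G" for i
  proof -
    have "a $ i \<le> 1" using sum_a a_nonneg member_le_sum[of i UNIV "\<lambda>k. a $ k"] by simp
    then have "a $ i * G \<le> G" using a_nonneg \<open>G \<ge> 0\<close> by (simp add: mult_left_le_one_le)
    then have "a $ i - r $ i \<le> G" using deficit by (meson order_trans)
    moreover have "r $ i - a $ i \<le> (\<Sum>k\<in>UNIV. max 0 (a $ k - r $ k))"
    proof -
      have "r $ i - a $ i \<le> (\<Sum>k\<in>UNIV. a $ k) - (\<Sum>k\<in>UNIV. r $ k) + (r $ i - a $ i)"
        using sum_a sum_r by simp
      also have "\<dots> = (\<Sum>k\<in>UNIV. (a $ k - r $ k) + (if k = i then r $ i - a $ i else 0))"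
        by (simp add: sum.distrib sum_subtractf)
      also have "\<dots> \<le> (\<Sum>k\<in>UNIV. max 0 (a $ k - r $ k))"
        by (intro sum_mono) auto
      finally show ?thesis .
    qed
    ultimately show ?thesis using total_deficit by linarith
  qed
  then have "norm1 (r - a) \<le> (\<Sum>k\<in>(UNIV::'n set). G)"
    unfolding norm1_def by (intro sum_mono) simp
  then show ?thesis by simp
qed

lemma g_eta_diff_le:
  assumes "\<tau> > 0" "\<forall>k. a $ k > 0" "\<forall>k. b $ k > 0" "nonneg_mat X"
    and "\<forall>k. row_sums Y $ k > 0 \<or> row_sums Y $ k = row_sums X $ k"
    and "\<forall>k. col_sums Y $ k > 0 \<or> col_sums Y $ k = col_sums X $ k"
  shows "g_eta C \<tau> \<eta> a b Y - g_eta C \<tau> \<eta> a b X \<le> (frob_inner C Y - frob_inner C X)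
     + \<eta> * (frob_sq Y - frob_sq X)
     + \<tau> * (\<Sum>k\<in>UNIV. (row_sums Y $ k - row_sums X $ k) * ln (row_sums Y $ k / a $ k))
     + \<tau> * (\<Sum>k\<in>UNIV. (col_sums Y $ k - col_sums X $ k) * ln (col_sums Y $ k / b $ k))"
proof -
  have "KL (row_sums Y) a - KL (row_sums X) a
      \<le> (\<Sum>k\<in>UNIV. (row_sums Y $ k - row_sums X $ k) * ln (row_sums Y $ k / a $ k))"
    using assms by (intro KL_diff_le) (auto simp: row_sums_nonneg)
  then have row: "\<tau> * (KL (row_sums Y) a - KL (row_sums X) a)
      \<le> \<tau> * (\<Sum>k\<in>UNIV. (row_sums Y $ k - row_sums X $ k) * ln (row_sums Y $ k / a $ k))"
    using \<open>\<tau> > 0\<close> by (intro mult_left_mono) auto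
  have "KL (col_sums Y) b - KL (col_sums X) b
      \<le> (\<Sum>k\<in>UNIV. (col_sums Y $ k - col_sums X $ k) * ln (col_sums Y $ k / b $ k))"
    using assms by (intro KL_diff_le) (auto simp: col_sums_nonneg)
  then have col: "\<tau> * (KL (col_sums Y) b - KL (col_sums X) b)
      \<le> \<tau> * (\<Sum>k\<in>UNIV. (col_sums Y $ k - col_sums X $ k) * ln (col_sums Y $ k / b $ k))"
    using \<open>\<tau> > 0\<close> by (intro mult_left_mono) auto
  show ?thesis
    using row col unfolding g_eta_def right_diff_distrib by linarith
qed

locale g_eta_minimizer =
  fixes C X :: "real^'n^'n::finite" and a b :: "real^'n" and \<tau> \<eta> :: real
  assumes C_nonneg: "nonneg_mat C"
    and tau_pos: "\<tau> > 0"
    and eta_nonneg: "\<eta> \<ge> 0"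
    and a_pos: "\<forall>i. a $ i > 0" and sum_a: "(\<Sum>i\<in>UNIV. a $ i) = 1"
    and b_pos: "\<forall>j. b $ j > 0" and sum_b: "(\<Sum>j\<in>UNIV. b $ j) = 1"
    and X_nonneg: "nonneg_mat X"
    and X_min: "\<forall>Y. nonneg_mat Y \<longrightarrow> g_eta C \<tau> \<eta> a b X \<le> g_eta C \<tau> \<eta> a b Y"
begin

lemma first_order_condition:
  assumes "nonneg_mat Y"
    and "\<forall>k. row_sums Y $ k > 0 \<or> row_sums Y $ k = row_sums X $ k"
    and "\<forall>k. col_sums Y $ k > 0 \<or> col_sums Y $ k = col_sums X $ k"
  shows "0 \<le> (frob_inner C Y - frob_inner C X) + \<eta> * (frob_sq Y - frob_sq X)
     + \<tau> * (\<Sum>k\<in>UNIV. (row_sums Y $ k - row_sums X $ k) * ln (row_sums Y $ k / a $ k))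
     + \<tau> * (\<Sum>k\<in>UNIV. (col_sums Y $ k - col_sums X $ k) * ln (col_sums Y $ k / b $ k))"
proof -
  have "g_eta C \<tau> \<eta> a b X \<le> g_eta C \<tau> \<eta> a b Y" using X_min assms(1) by blast
  then show ?thesis
    using g_eta_diff_le[OF tau_pos a_pos b_pos X_nonneg assms(2,3), of C \<eta>] by linarith
qed

lemma scaled_entropy_sum_nonpos:
  assumes "0 < t" "t < 1"
  shows "(\<Sum>k\<in>UNIV. row_sums X $ k * ln (t * row_sums X $ k / a $ k))
    + (\<Sum>k\<in>UNIV. col_sums X $ k * ln (t * col_sums X $ k / b $ k)) \<le> 0"
proof -
  let ?Y = "t *\<^sub>R X"
  have "nonneg_mat ?Y" using X_nonneg assms unfolding nonneg_mat_def by simp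
  moreover have "\<forall>k. row_sums ?Y $ k > 0 \<or> row_sums ?Y $ k = row_sums X $ k"
    using row_sums_nonneg[OF X_nonneg] assms by (auto simp: zero_less_mult_iff less_eq_real_def)
  moreover have "\<forall>k. col_sums ?Y $ k > 0 \<or> col_sums ?Y $ k = col_sums X $ k"
    using col_sums_nonneg[OF X_nonneg] assms by (auto simp: zero_less_mult_iff less_eq_real_def)
  ultimately have foc: "0 \<le> (frob_inner C ?Y - frob_inner C X) + \<eta> * (frob_sq ?Y - frob_sq X)
     + \<tau> * (\<Sum>k\<in>UNIV. (row_sums ?Y $ k - row_sums X $ k) * ln (row_sums ?Y $ k / a $ k))
     + \<tau> * (\<Sum>k\<in>UNIV. (col_sums ?Y $ k - col_sums X $ k) * ln (col_sums ?Y $ k / b $ k))"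
    by (rule first_order_condition)
  have "0 \<le> frob_inner C X"
    using C_nonneg X_nonneg unfolding frob_inner_def nonneg_mat_def by (intro sum_nonneg) simp
  then have linear: "frob_inner C ?Y - frob_inner C X \<le> 0"
    using assms by (simp add: mult_left_le_one_le)
  have "0 \<le> frob_sq X" unfolding frob_sq_def by (intro sum_nonneg) simp
  moreover have "t\<^sup>2 \<le> 1" using assms by (simp add: power_le_one)
  ultimately have quadratic: "\<eta> * (frob_sq ?Y - frob_sq X) \<le> 0"
    using eta_nonneg by (simp add: mult_nonneg_nonpos mult_left_le_one_le)
  have rates: "(\<Sum>k\<in>UNIV. (row_sums ?Y $ k - row_sums X $ k) * ln (row_sums ?Y $ k / a $ k))
      = - (1 - t) * (\<Sum>k\<in>UNIV. row_sums X $ k * ln (t * row_sums X $ k / a $ k))"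
    "(\<Sum>k\<in>UNIV. (col_sums ?Y $ k - col_sums X $ k) * ln (col_sums ?Y $ k / b $ k))
      = - (1 - t) * (\<Sum>k\<in>UNIV. col_sums X $ k * ln (t * col_sums X $ k / b $ k))"
    by (simp_all add: sum_distrib_left algebra_simps)
  then have "0 \<le> \<tau> * (- (1 - t) * (\<Sum>k\<in>UNIV. row_sums X $ k * ln (t * row_sums X $ k / a $ k)))
      + \<tau> * (- (1 - t) * (\<Sum>k\<in>UNIV. col_sums X $ k * ln (t * col_sums X $ k / b $ k)))"
    using foc[unfolded rates] linear quadratic by linarith
  then have "0 \<le> \<tau> * (1 - t) * (- ((\<Sum>k\<in>UNIV. row_sums X $ k * ln (t * row_sums X $ k / a $ k))
      + (\<Sum>k\<in>UNIV. col_sums X $ k * ln (t * col_sums X $ k / b $ k))))"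
    by (simp add: algebra_simps)
  moreover have "\<tau> * (1 - t) > 0" using tau_pos assms by simp
  ultimately show ?thesis by (simp add: zero_le_mult_iff)
qed

lemma total_mass_le_one: "(\<Sum>k\<in>UNIV. row_sums X $ k) \<le> 1"
proof (rule field_le_mult_one_interval)
  fix t :: real
  assume t: "0 < t" "t < 1"
  define s where "s = (\<Sum>k\<in>UNIV. row_sums X $ k)"
  have "s - 1 / t \<le> (\<Sum>k\<in>UNIV. row_sums X $ k * ln (t * row_sums X $ k / a $ k))"
    using sum_mult_ln_ge[of "row_sums X" a t] row_sums_nonneg[OF X_nonneg] a_pos sum_a t
    by (simp add: s_def)
  moreover have "s - 1 / t \<le> (\<Sum>k\<in>UNIV. col_sums X $ k * ln (t * col_sums X $ k / b $ k))"
    using sum_mult_ln_ge[of "col_sums X" b t] col_sums_nonneg[OF X_nonneg] b_pos sum_b t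
    by (simp add: s_def sum_col_sums)
  ultimately have "s \<le> 1 / t" using scaled_entropy_sum_nonpos[OF t] by linarith
  then show "t * (\<Sum>k\<in>UNIV. row_sums X $ k) \<le> 1" using t by (simp add: s_def field_simps)
qed

lemma entry_le_one: "X $ i $ j \<le> 1"
  using entry_le_sum_row_sums[OF X_nonneg] total_mass_le_one order_trans by blast

lemma exists_col_sum_le: "\<exists>j. col_sums X $ j \<le> b $ j"
proof (rule ccontr)
  assume "\<nexists>j. col_sums X $ j \<le> b $ j"
  then have "(\<Sum>j\<in>UNIV. b $ j) < (\<Sum>j\<in>UNIV. col_sums X $ j)"
    by (intro sum_strict_mono) (auto simp: not_le)
  then show False using total_mass_le_one sum_b by (simp add: sum_col_sums)
qed

lemma entry_increase_rate_nonneg: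
  assumes "\<epsilon> > 0"
  shows "0 \<le> C $ i $ j + \<eta> * (2 * X $ i $ j + \<epsilon>)
    + \<tau> * ln ((row_sums X $ i + \<epsilon>) / a $ i) + \<tau> * ln ((col_sums X $ j + \<epsilon>) / b $ j)"
proof -
  let ?Y = "add_entry X i j \<epsilon>"
  have "nonneg_mat ?Y" using X_nonneg assms unfolding nonneg_mat_def by simp
  moreover have "\<forall>k. row_sums ?Y $ k > 0 \<or> row_sums ?Y $ k = row_sums X $ k"
    using row_sums_nonneg[OF X_nonneg] assms by (auto simp: add_nonneg_pos)
  moreover have "\<forall>k. col_sums ?Y $ k > 0 \<or> col_sums ?Y $ k = col_sums X $ k"
    using col_sums_nonneg[OF X_nonneg] assms by (auto simp: add_nonneg_pos)
  ultimately have "0 \<le> (frob_inner C ?Y - frob_inner C X) + \<eta> * (frob_sq ?Y - frob_sq X)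
     + \<tau> * (\<Sum>k\<in>UNIV. (row_sums ?Y $ k - row_sums X $ k) * ln (row_sums ?Y $ k / a $ k))
     + \<tau> * (\<Sum>k\<in>UNIV. (col_sums ?Y $ k - col_sums X $ k) * ln (col_sums ?Y $ k / b $ k))"
    by (rule first_order_condition)
  then have "0 \<le> \<epsilon> * (C $ i $ j + \<eta> * (2 * X $ i $ j + \<epsilon>)
    + \<tau> * ln ((row_sums X $ i + \<epsilon>) / a $ i) + \<tau> * ln ((col_sums X $ j + \<epsilon>) / b $ j))"
    by (simp add: if_distrib[of "\<lambda>t. t * _"] algebra_simps power2_eq_square cong: if_cong)
  then show ?thesis using assms by (simp add: zero_le_mult_iff)
qed

lemma row_sum_lower_approx:
  assumes col: "col_sums X $ j \<le> b $ j" and "\<epsilon> > 0"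
  shows "\<tau> * a $ i - a $ i * (max_abs_norm C + 2 * \<eta>)
    \<le> \<tau> * row_sums X $ i + \<epsilon> * (\<tau> + a $ i * (\<eta> + \<tau> / b $ j))"
proof -
  define r where "r = row_sums X $ i"
  have ai: "a $ i > 0" and bj: "b $ j > 0" using a_pos b_pos by auto
  have "ln ((r + \<epsilon>) / a $ i) \<le> (r + \<epsilon>) / a $ i - 1"
    using row_sums_nonneg[OF X_nonneg] assms ai
    by (intro ln_le_minus_one divide_pos_pos add_nonneg_pos) (auto simp: r_def)
  then have row_term: "\<tau> * ln ((r + \<epsilon>) / a $ i) \<le> \<tau> * ((r + \<epsilon>) / a $ i - 1)"
    using tau_pos by (intro mult_left_mono) auto
  have "ln ((col_sums X $ j + \<epsilon>) / b $ j) \<le> (col_sums X $ j + \<epsilon>) / b $ j - 1"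
    using col_sums_nonneg[OF X_nonneg] assms bj
    by (intro ln_le_minus_one divide_pos_pos add_nonneg_pos) auto
  also have "\<dots> \<le> \<epsilon> / b $ j" using col bj by (simp add: field_simps)
  finally have col_term: "\<tau> * ln ((col_sums X $ j + \<epsilon>) / b $ j) \<le> \<tau> * (\<epsilon> / b $ j)"
    using tau_pos by (intro mult_left_mono) auto
  have quadratic_term: "\<eta> * (2 * X $ i $ j + \<epsilon>) \<le> \<eta> * (2 + \<epsilon>)"
    using eta_nonneg entry_le_one by (intro mult_left_mono) auto
  have "C $ i $ j \<le> max_abs_norm C" using abs_entry_le_max_abs_norm abs_le_D1 by blast
  then have "0 \<le> max_abs_norm C + \<eta> * (2 + \<epsilon>) + \<tau> * ((r + \<epsilon>) / a $ i - 1) + \<tau> * (\<epsilon> / b $ j)"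
    using entry_increase_rate_nonneg[OF \<open>\<epsilon> > 0\<close>, of i j] row_term col_term quadratic_term
    unfolding r_def by linarith
  then have "0 \<le> a $ i * (max_abs_norm C + \<eta> * (2 + \<epsilon>) + \<tau> * ((r + \<epsilon>) / a $ i - 1)
    + \<tau> * (\<epsilon> / b $ j))"
    using ai by simp
  also have "\<dots> = a $ i * max_abs_norm C + a $ i * \<eta> * 2 + \<epsilon> * (a $ i * \<eta>) + \<tau> * r
      + \<tau> * \<epsilon> - \<tau> * a $ i + \<epsilon> * (a $ i * (\<tau> / b $ j))"
    using ai by (simp add: algebra_simps add_divide_distrib)
  finally show ?thesis by (simp add: r_def algebra_simps)
qed

lemma row_sum_lower: "a $ i - row_sums X $ i \<le> a $ i * (max_abs_norm C + 2 * \<eta>) / \<tau>"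
proof -
  obtain j where col: "col_sums X $ j \<le> b $ j" using exists_col_sum_le by blast
  define K where "K = \<tau> + a $ i * (\<eta> + \<tau> / b $ j)"
  have "0 \<le> a $ i * (\<eta> + \<tau> / b $ j)"
    using tau_pos a_pos b_pos eta_nonneg by (simp add: less_imp_le)
  then have "K > 0" unfolding K_def using tau_pos by simp
  have "\<tau> * a $ i - a $ i * (max_abs_norm C + 2 * \<eta>) \<le> \<tau> * row_sums X $ i"
  proof (rule field_le_epsilon)
    fix e :: real
    assume "e > 0"
    then show "\<tau> * a $ i - a $ i * (max_abs_norm C + 2 * \<eta>) \<le> \<tau> * row_sums X $ i + e"
      using row_sum_lower_approx[OF col, of "e / K" i] \<open>K > 0\<close> by (simp add: K_def)
  qed
  then show ?thesis using tau_pos by (simp add: field_simps)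
qed

lemma norm1_row_sums_le:
  "norm1 (row_sums X - a) \<le> real CARD('n) * (max_abs_norm C + 2 * \<eta>) / \<tau>"
  using norm1_diff_le_of_deficit_le[of a "row_sums X" "(max_abs_norm C + 2 * \<eta>) / \<tau>"]
    a_pos sum_a total_mass_le_one row_sum_lower max_abs_norm_nonneg[of C] eta_nonneg tau_pos
  by (simp add: less_imp_le)

end

lemma row_sums_transpose: "row_sums (transpose X) = col_sums X"
  unfolding row_sums_def col_sums_def transpose_def by simp

lemma col_sums_transpose: "col_sums (transpose X) = row_sums X"
  unfolding row_sums_def col_sums_def transpose_def by simp

lemma nonneg_mat_transpose: "nonneg_mat (transpose X) \<longleftrightarrow> nonneg_mat X"
  unfolding nonneg_mat_def transpose_def by auto

lemma max_abs_norm_transpose: "max_abs_norm (transpose C) = max_abs_norm C"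
proof -
  have "{\<bar>transpose C $ i $ j\<bar> | i j. True} = {\<bar>C $ i $ j\<bar> | i j. True}"
    unfolding transpose_def by auto
  then show ?thesis unfolding max_abs_norm_def by simp
qed

lemma g_eta_transpose: "g_eta (transpose C) \<tau> \<eta> b a (transpose Y) = g_eta C \<tau> \<eta> a b Y"
proof -
  have "frob_inner (transpose C) (transpose Y) = frob_inner C Y"
    unfolding frob_inner_def transpose_def by simp (rule sum.swap)
  moreover have "frob_sq (transpose Y) = frob_sq Y"
    unfolding frob_sq_def transpose_def by simp (rule sum.swap)
  ultimately show ?thesis
    unfolding g_eta_def row_sums_transpose col_sums_transpose by simp
qed

lemma (in g_eta_minimizer) transpose_minimizer:
  "g_eta_minimizer (transpose C) (transpose X) b a \<tau> \<eta>"
proof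
  show "\<forall>Y. nonneg_mat Y \<longrightarrow>
      g_eta (transpose C) \<tau> \<eta> b a (transpose X) \<le> g_eta (transpose C) \<tau> \<eta> b a Y"
    using X_min g_eta_transpose[of C \<tau> \<eta> b a] transpose_transpose nonneg_mat_transpose
    by metis
qed (use C_nonneg tau_pos eta_nonneg a_pos sum_a b_pos sum_b X_nonneg nonneg_mat_transpose in auto)

lemma (in g_eta_minimizer) norm1_col_sums_le:
  "norm1 (col_sums X - b) \<le> real CARD('n) * (max_abs_norm C + 2 * \<eta>) / \<tau>"
proof -
  interpret transposed: g_eta_minimizer "transpose C" "transpose X" b a \<tau> \<eta>
    by (rule transpose_minimizer)
  show ?thesis
    using transposed.norm1_row_sums_le by (simp add: row_sums_transpose max_abs_norm_transpose)
qed

theorem mainTheorem12: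
  fixes C X :: "real^'n^'n::finite" and a b :: "real^'n" and \<tau> \<eta> :: real
  assumes C_nonneg: "nonneg_mat C"
    and tau_pos: "\<tau> > 0"
    and eta_pos: "\<eta> > 0"
    and a_simplex: "in_simplex a" and a_pos: "\<forall>i. a $ i > 0"
    and b_simplex: "in_simplex b" and b_pos: "\<forall>i. b $ i > 0"
    and X_nonneg: "nonneg_mat X"
    and X_min: "\<forall>Y. nonneg_mat Y \<longrightarrow> g_eta C \<tau> \<eta> a b X \<le> g_eta C \<tau> \<eta> a b Y"
    and X_unique: "\<forall>Y. nonneg_mat Y \<and> g_eta C \<tau> \<eta> a b Y \<le> g_eta C \<tau> \<eta> a b X \<longrightarrow> Y = X"
  shows "norm1 (row_sums X - a) \<le> real CARD('n) * (max_abs_norm C + 2 * \<eta>) / \<tau>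
    \<and> norm1 (col_sums X - b) \<le> real CARD('n) * (max_abs_norm C + 2 * \<eta>) / \<tau>"
proof -
  interpret g_eta_minimizer C X a b \<tau> \<eta>
    using assms unfolding in_simplex_def by unfold_locales auto
  show ?thesis using norm1_row_sums_le norm1_col_sums_le by blast
qed

end
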